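(* The Filtered Greedy Strategy (\texttt{FGS}) is a 3-approximation algorithm for \textbf{LTSP}: for every instance, the set $\mathcal B_1^{\mathrm{FGS}}$ it returns satisfies $v(\mathcal B_1^{\mathrm{FGS}})\le 3\,\mathrm{OPT}$, where $\mathrm{OPT}$ is the minimum total response time of the instance.
   Context: A single-track tape stores a sequence of files $\mathcal F=(f_1,\dots,f_n)$ laid out contiguously from left to right: file $f$ occupies blocks $l(f),\dots,r(f)$, has size $s(f)=r(f)-l(f)+1$, $l(f_1)=1$, $l(f_{i+1})=r(f_i)+1$, and $m=\sum_f s(f)$. The tape moves one block per time step; at time $0$ the head is at position $m$. A file is read when the head traverses it rightwards from $l(f)$ to $r(f)$. $\mathcal R$ is a finite set of requests, all released at time $0$, each associated with a file $f(r)$; $n(f)$ is the number of requests for $f$. A request's response time is the time at which the head starts a rightward reading traversal of its file (all pending requests of a file are serviced simultaneously). \textbf{LTSP} asks for a head movement minimizing the sum of response times. For files, $f'<f$ means $l(f')<l(f)$. A mini-batch is a pair $b=(f,f')$ of files with $l(f)\le l(f')$; $l(b)=l(f)$, $r(b)=r(f')$, $s(b)=r(b)-l(b)+1$, $\mathcal F(b)$ is the set of files $g$ with $l(b)\le l(g)$, $r(g)\le r(b)$; for a set $\mathcal B_1$, $\mathcal F(\mathcal B_1)=\bigcup_{b\in\mathcal B_1}\mathcal F(b)$, and $b<f$ means $l(b)<l(f)$. Given $\mathcal B_1$, its schedule is: Phase 1, the head moves leftwards from $m$ to $1$, and upon reaching $l(b)$ for $b\in\mathcal B_1$ executes $b$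 (moves rightwards to $r(b)$, reading all files of $\mathcal F(b)$, and returns to $l(b)$), then continues leftwards; Phase 2, the head moves rightwards from $1$ to $m$ reading every file; $v(\mathcal B_1)$ is its total response time. The Greedy Strategy (\texttt{GS}) returns $\{(f,f): f\in\mathcal F\setminus\{f_1\},\ n(f)>0\}$. \texttt{FGS} starts with $\mathcal B_1$ equal to the output of \texttt{GS} and then, for $|\mathcal F|$ rounds, for each file $f\in\mathcal F(\mathcal B_1)$ (with the current $\mathcal B_1$) removes $(f,f)$ from $\mathcal B_1$ whenever $n(f)\bigl(l(f)+\sum_{b\in\mathcal B_1,\ b<f}s(b)\bigr) < s(f)\bigl(\sum_{f'\in\mathcal F,\ f'<f}n(f')+\sum_{f'\in\mathcal F\setminus\mathcal F(\mathcal B_1),\ f'>f}n(f')\bigr)$; it returns the final $\mathcal B_1$. *)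

theory Defs
  imports Main
begin

text \<open>
Files are indexed 0,...,N-1 (index i stands for f_{i+1}); s i is the size of file i.
Head positions are block indices (integers); the head moves at most one block per time step.
\<close>

definition lft :: "(nat \<Rightarrow> nat) \<Rightarrow> nat \<Rightarrow> nat" where
  "lft s i = 1 + (\<Sum>j<i. s j)"

definition rgt :: "(nat \<Rightarrow> nat) \<Rightarrow> nat \<Rightarrow> nat" where
  "rgt s i = lft s i + s i - 1"

definition tape_len :: "nat \<Rightarrow> (nat \<Rightarrow> nat) \<Rightarrow> nat" where
  "tape_len N s = (\<Sum>j<N. s j)"

definition nreq :: "'r set \<Rightarrow> ('r \<Rightarrow> nat) \<Rightarrow> nat \<Rightarrow> nat" where
  "nreq R ff i = card {q\<in>R. ff q = i}"

definition reads_at :: "(nat \<Rightarrow> nat) \<Rightarrow> (nat \<Rightarrow> int) \<Rightarrow> nat \<Rightarrow> nat \<Rightarrow> bool" where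
  "reads_at s p i t \<longleftrightarrow> (\<forall>k<s i. p (t + k) = int (lft s i + k))"

definition resp_time :: "(nat \<Rightarrow> nat) \<Rightarrow> (nat \<Rightarrow> int) \<Rightarrow> nat \<Rightarrow> nat" where
  "resp_time s p i = (LEAST t. reads_at s p i t)"

definition total_resp :: "(nat \<Rightarrow> nat) \<Rightarrow> 'r set \<Rightarrow> ('r \<Rightarrow> nat) \<Rightarrow> (nat \<Rightarrow> int) \<Rightarrow> nat" where
  "total_resp s R ff p = (\<Sum>q\<in>R. resp_time s p (ff q))"

definition feasible_mv :: "nat \<Rightarrow> (nat \<Rightarrow> nat) \<Rightarrow> 'r set \<Rightarrow> ('r \<Rightarrow> nat) \<Rightarrow> (nat \<Rightarrow> int) \<Rightarrow> bool" where
  "feasible_mv N s R ff p \<longleftrightarrow>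
     p 0 = int (tape_len N s) \<and>
     (\<forall>t. \<bar>p (Suc t) - p t\<bar> \<le> 1) \<and>
     (\<forall>t. 1 \<le> p t \<and> p t \<le> int (tape_len N s)) \<and>
     (\<forall>q\<in>R. \<exists>t. reads_at s p (ff q) t)"

definition OPT :: "nat \<Rightarrow> (nat \<Rightarrow> nat) \<Rightarrow> 'r set \<Rightarrow> ('r \<Rightarrow> nat) \<Rightarrow> nat" where
  "OPT N s R ff = (INF p \<in> {p. feasible_mv N s R ff p}. total_resp s R ff p)"

(* mini-batches b = (f, f'), f \<le> f' as file indices; l(b) = l(f), r(b) = r(f') *)
definition excursion :: "int \<Rightarrow> int \<Rightarrow> int list" where
  "excursion x y = [x+1..y] @ rev [x..y-1]"

definition phase1_at :: "(nat \<Rightarrow> nat) \<Rightarrow> (nat \<times> nat) set \<Rightarrow> int \<Rightarrow> int list" where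
  "phase1_at s B x = x # concat (map (\<lambda>g. excursion x (int (rgt s g)))
       (sorted_list_of_set {snd b |b. b \<in> B \<and> int (lft s (fst b)) = x}))"

definition sched_path :: "nat \<Rightarrow> (nat \<Rightarrow> nat) \<Rightarrow> (nat \<times> nat) set \<Rightarrow> int list" where
  "sched_path N s B =
     concat (map (phase1_at s B) (rev [1..int (tape_len N s)])) @ [2..int (tape_len N s)]"

definition sched_mv :: "nat \<Rightarrow> (nat \<Rightarrow> nat) \<Rightarrow> (nat \<times> nat) set \<Rightarrow> nat \<Rightarrow> int" where
  "sched_mv N s B t = (if t < length (sched_path N s B) then sched_path N s B ! t
                       else int (tape_len N s))"

definition v :: "nat \<Rightarrow> (nat \<Rightarrow> nat) \<Rightarrow> 'r set \<Rightarrow> ('r \<Rightarrow> nat) \<Rightarrow> (nat \<times> nat) set \<Rightarrow> nat" where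
  "v N s R ff B = total_resp s R ff (sched_mv N s B)"

(* Greedy Strategy, as the set of files f with (f,f) in B1 *)
definition GS_files :: "nat \<Rightarrow> 'r set \<Rightarrow> ('r \<Rightarrow> nat) \<Rightarrow> nat set" where
  "GS_files N R ff = {f. 0 < f \<and> f < N \<and> 0 < nreq R ff f}"

definition fgs_check :: "nat \<Rightarrow> (nat \<Rightarrow> nat) \<Rightarrow> 'r set \<Rightarrow> ('r \<Rightarrow> nat) \<Rightarrow> nat \<Rightarrow> nat set \<Rightarrow> nat set" where
  "fgs_check N s R ff f S =
     (if f \<in> S \<and>
         nreq R ff f * (lft s f + (\<Sum>g\<in>{g\<in>S. g < f}. s g))
         < s f * ((\<Sum>g<f. nreq R ff g) + (\<Sum>g\<in>{f<..<N} - S. nreq R ff g))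
      then S - {f} else S)"

definition fgs_round :: "nat \<Rightarrow> (nat \<Rightarrow> nat) \<Rightarrow> 'r set \<Rightarrow> ('r \<Rightarrow> nat) \<Rightarrow> nat set \<Rightarrow> nat set" where
  "fgs_round N s R ff S = fold (fgs_check N s R ff) [0..<N] S"

definition FGS :: "nat \<Rightarrow> (nat \<Rightarrow> nat) \<Rightarrow> 'r set \<Rightarrow> ('r \<Rightarrow> nat) \<Rightarrow> (nat \<times> nat) set" where
  "FGS N s R ff = (\<lambda>f. (f, f)) ` ((fgs_round N s R ff ^^ N) (GS_files N R ff))"

end

theory Submission
  imports Defs
begin

text \<open>
  The head starts at block m, so every feasible movement serves a request for file h no earlier
  than m - l(h); the sum LB of these distances is a lower bound on OPT.
  In the schedule of single-file batches S, a request for a batched file h is served after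
  m - l(h) plus the excursions (there and back) of the batches right of h, and a request for an
  unbatched file after all of Phase 1 and the walk back from block 1 to l(h).
  FGS keeps the invariant that the delay caused by the greedy batches it dropped is at most the
  time their removal saves the requests to their left.
  With it, the total detour of all requests is at most the sum over the files u of s(u) times
  the number of requests for files left of u, which is at most LB; as every detour is walked
  twice, v \<le> LB + 2 LB \<le> 3 OPT.
\<close>

section \<open>Tape geometry\<close>

lemma lft_ge_1: "1 \<le> lft s i"
  unfolding lft_def by simp

lemma lft_add_size_le:
  assumes "i < j"
  shows "lft s i + s i \<le> lft s j"
proof -
  have "(\<Sum>k<i. s k) + s i = (\<Sum>k<Suc i. s k)" by simp
  also have "\<dots> \<le> (\<Sum>k<j. s k)"
    by (rule sum_mono2) (use assms in auto)
  finally show ?thesis unfolding lft_def by simp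
qed

lemma lft_eq_tape_len: "lft s N = tape_len N s + 1"
  unfolding lft_def tape_len_def by simp

lemma lft_less_lft_iff:
  assumes pos: "\<forall>k<N. 0 < s k" and "i < N" "j < N"
  shows "lft s i < lft s j \<longleftrightarrow> i < j"
proof
  assume "i < j"
  then show "lft s i < lft s j" using lft_add_size_le[of i j s] pos assms(2) by fastforce
next
  assume "lft s i < lft s j"
  then show "i < j" using lft_add_size_le[of j i s] by (metis linorder_neqE_nat add_leD1 leD less_imp_le)
qed

lemma lft_eq_lft_iff:
  assumes pos: "\<forall>k<N. 0 < s k" and "i < N" "j < N"
  shows "lft s i = lft s j \<longleftrightarrow> i = j"
  using lft_less_lft_iff[OF pos assms(2,3)] lft_less_lft_iff[OF pos assms(3,2)]
  by (metis less_irrefl nat_neq_iff)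

lemma lft_le_tape_len:
  assumes "i < N" "0 < s i"
  shows "lft s i \<le> tape_len N s"
  using lft_add_size_le[OF assms(1), of s] assms(2) lft_eq_tape_len[of s N] by simp

lemma lft_ge_2:
  assumes "0 < s 0" "0 < g"
  shows "2 \<le> lft s g"
  using lft_add_size_le[OF assms(2), of s] assms(1) by (simp add: lft_def)

lemma tape_len_ge_1:
  assumes "0 < N" "0 < s 0"
  shows "1 \<le> tape_len N s"
  using lft_le_tape_len[of 0 N s] assms lft_ge_1[of s 0] by simp

lemma sum_sizes_after_le:
  assumes "h < N" "0 < s h"
  shows "(\<Sum>u\<in>{h<..<N}. s u) \<le> tape_len N s - lft s h"
proof -
  have "{..<Suc h} \<union> {h<..<N} = {..<N}" using assms(1) by auto
  moreover have "(\<Sum>u\<in>{..<Suc h} \<union> {h<..<N}. s u) = (\<Sum>u<Suc h. s u) + (\<Sum>u\<in>{h<..<N}. s u)"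
    by (rule sum.union_disjoint) auto
  ultimately have "tape_len N s = (\<Sum>u<Suc h. s u) + (\<Sum>u\<in>{h<..<N}. s u)"
    unfolding tape_len_def by simp
  then show ?thesis using assms(2) unfolding lft_def by simp
qed

section \<open>A lower bound on OPT\<close>

lemma displacement_le_time:
  assumes "\<forall>t. \<bar>p (Suc t) - p t\<bar> \<le> (1::int)"
  shows "\<bar>p t - p 0\<bar> \<le> int t"
proof (induction t)
  case (Suc t)
  then show ?case using assms[rule_format, of t] by linarith
qed simp

lemma resp_time_ge_distance:
  assumes feas: "feasible_mv N s R ff p" and "q \<in> R" and "0 < s (ff q)"
  shows "tape_len N s - lft s (ff q) \<le> resp_time s p (ff q)"
proof -
  let ?t = "resp_time s p (ff q)"
  obtain t where "reads_at s p (ff q) t" using feas \<open>q \<in> R\<close> unfolding feasible_mv_def by blast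
  then have "reads_at s p (ff q) ?t"
    unfolding resp_time_def by (rule LeastI)
  then have "p ?t = int (lft s (ff q))"
    using \<open>0 < s (ff q)\<close> unfolding reads_at_def by (metis add.right_neutral)
  moreover have "\<bar>p ?t - p 0\<bar> \<le> int ?t" and "p 0 = int (tape_len N s)"
    using feas displacement_le_time unfolding feasible_mv_def by blast+
  ultimately show ?thesis by linarith
qed

text \<open>One full sweep: it shows that OPT is an infimum over a nonempty set.\<close>
definition sweep_mv :: "nat \<Rightarrow> nat \<Rightarrow> int" where
  "sweep_mv m t = (if t < m then int m - int t else min (int t - int m + 2) (int m))"

lemma feasible_sweep_mv:
  assumes pos: "\<forall>i<N. 0 < s i" and files: "\<forall>q\<in>R. ff q < N" and "0 < N"
  shows "feasible_mv N s R ff (sweep_mv (tape_len N s))"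
proof -
  let ?m = "tape_len N s"
  have m1: "1 \<le> ?m" using tape_len_ge_1 \<open>0 < N\<close> pos by blast
  have "reads_at s (sweep_mv ?m) i (?m + lft s i - 2)" if "i < N" for i
    unfolding reads_at_def
  proof (intro allI impI)
    fix k assume "k < s i"
    moreover have "lft s i + s i \<le> ?m + 1"
      using lft_add_size_le[OF that, of s] lft_eq_tape_len[of s N] by simp
    ultimately show "sweep_mv ?m (?m + lft s i - 2 + k) = int (lft s i + k)"
      using lft_ge_1[of s i] m1 unfolding sweep_mv_def by auto
  qed
  with files m1 show ?thesis
    unfolding feasible_mv_def by (auto simp: sweep_mv_def)
qed

lemma OPT_ge_sum_distances:
  assumes pos: "\<forall>i<N. 0 < s i" and files: "\<forall>q\<in>R. ff q < N" and "0 < N"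
  shows "(\<Sum>q\<in>R. tape_len N s - lft s (ff q)) \<le> OPT N s R ff"
  unfolding OPT_def
proof (rule cINF_greatest)
  show "{p. feasible_mv N s R ff p} \<noteq> {}" using feasible_sweep_mv[OF assms] by blast
next
  fix p assume "p \<in> {p. feasible_mv N s R ff p}"
  then have "feasible_mv N s R ff p" by simp
  then show "(\<Sum>q\<in>R. tape_len N s - lft s (ff q)) \<le> total_resp s R ff p"
    unfolding total_resp_def using pos files
    by (auto intro!: sum_mono resp_time_ge_distance[of N s R ff])
qed

section \<open>Schedules of single-file batches\<close>

lemma sum_list_map_take:
  "i \<le> length xs \<Longrightarrow> sum_list (map f (take i xs)) = (\<Sum>j<i. f (xs ! j))"
  by (simp add: sum_list_sum_nth atLeast0LessThan min_absorb1)

lemma concat_index_less_length: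
  "i < length xss \<Longrightarrow> j < length (xss ! i) \<Longrightarrow>
   sum_list (map length (take i xss)) + j < length (concat xss)"
proof (induction xss arbitrary: i)
  case (Cons xs xss)
  then show ?case by (cases i) auto
qed simp

lemma nth_concat_take_lengths:
  "i < length xss \<Longrightarrow> j < length (xss ! i) \<Longrightarrow>
   concat xss ! (sum_list (map length (take i xss)) + j) = xss ! i ! j"
proof (induction xss arbitrary: i)
  case (Cons xs xss)
  then show ?case by (cases i) (auto simp: nth_append add.assoc)
qed simp

abbreviation single_batches :: "nat set \<Rightarrow> (nat \<times> nat) set" where
  "single_batches S \<equiv> (\<lambda>f. (f, f)) ` S"

definition phase1_blocks :: "nat \<Rightarrow> (nat \<Rightarrow> nat) \<Rightarrow> (nat \<times> nat) set \<Rightarrow> int list list" where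
  "phase1_blocks N s B = map (phase1_at s B) (rev [1..int (tape_len N s)])"

lemma sched_path_eq_phase1_blocks:
  "sched_path N s B = concat (phase1_blocks N s B) @ [2..int (tape_len N s)]"
  unfolding sched_path_def phase1_blocks_def ..

lemma length_phase1_blocks: "length (phase1_blocks N s B) = tape_len N s"
  unfolding phase1_blocks_def by simp

lemma nth_phase1_blocks:
  "j < tape_len N s \<Longrightarrow> phase1_blocks N s B ! j = phase1_at s B (int (tape_len N s) - int j)"
  unfolding phase1_blocks_def by (simp add: rev_nth)

lemma phase1_at_single_batches:
  "phase1_at s (single_batches S) x = x # concat (map (\<lambda>g. excursion x (int (rgt s g)))
       (sorted_list_of_set {g\<in>S. int (lft s g) = x}))"
proof -
  have "{snd b |b. b \<in> single_batches S \<and> int (lft s (fst b)) = x} = {g\<in>S. int (lft s g) = x}"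
    by force
  then show ?thesis unfolding phase1_at_def by simp
qed

lemma phase1_at_no_batch:
  assumes "\<forall>g\<in>S. int (lft s g) \<noteq> x"
  shows "phase1_at s (single_batches S) x = [x]"
proof -
  have no_batch: "{g\<in>S. int (lft s g) = x} = {}" using assms by auto
  show ?thesis unfolding phase1_at_single_batches no_batch by simp
qed

text \<open>
  Half the delay, beyond m - l(h), with which the schedule of S reads file h: the excursions of
  the batches right of h and, for an unbatched h, the rest of Phase 1 and the walk back from
  block 1 to l(h).
\<close>
definition detour :: "(nat \<Rightarrow> nat) \<Rightarrow> nat set \<Rightarrow> nat \<Rightarrow> nat" where
  "detour s S h = (\<Sum>g\<in>{g\<in>S. h < g}. s g - 1)
     + (if h \<in> S then 0 else lft s h - 1 + (\<Sum>g\<in>{g\<in>S. g < h}. s g - 1))"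

context
  fixes N :: nat and s :: "nat \<Rightarrow> nat" and S :: "nat set"
  assumes pos: "\<forall>k<N. 0 < s k" and S_files: "S \<subseteq> {..<N}"
begin

lemma finite_batches: "finite S"
  using S_files by (rule finite_subset) simp

lemma phase1_at_batch:
  assumes "g \<in> S"
  shows "phase1_at s (single_batches S) (int (lft s g))
           = int (lft s g) # excursion (int (lft s g)) (int (rgt s g))"
proof -
  have "{g'\<in>S. lft s g' = lft s g} = {g}"
    using lft_eq_lft_iff[OF pos, of _ g] S_files assms by blast
  then show ?thesis unfolding phase1_at_single_batches by simp
qed

lemma length_phase1_at:
  "length (phase1_at s (single_batches S) x)
     = 1 + (\<Sum>g\<in>S. if int (lft s g) = x then 2 * (s g - 1) else 0)"
proof (cases "\<exists>g\<in>S. int (lft s g) = x")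
  case True
  then obtain g where g: "g \<in> S" "int (lft s g) = x" by blast
  have "int (lft s g') = x \<longleftrightarrow> g' = g" if "g' \<in> S" for g'
    using lft_eq_lft_iff[OF pos, of g' g] S_files g that by fastforce
  then have "(\<Sum>g'\<in>S. if int (lft s g') = x then 2 * (s g' - 1) else 0) = 2 * (s g - 1)"
    using g(1) finite_batches by (simp add: sum.delta cong: sum.cong)
  moreover have "0 < s g" using pos S_files g(1) by blast
  ultimately show ?thesis
    using phase1_at_batch[OF g(1)] g(2) by (simp add: excursion_def rgt_def)
next
  case False
  then show ?thesis by (simp add: phase1_at_no_batch)
qed

lemma nth_phase1_at_batch:
  assumes "g \<in> S" "k < s g"
  shows "phase1_at s (single_batches S) (int (lft s g)) ! k = int (lft s g) + int k"
proof (cases k)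
  case (Suc k')
  have "0 < s g" using pos S_files assms(1) by blast
  then have "length [int (lft s g) + 1..int (rgt s g)] = s g - 1"
    unfolding rgt_def by simp
  moreover have "k' < s g - 1" using assms(2) Suc by simp
  ultimately show ?thesis
    using phase1_at_batch[OF assms(1)] Suc
    by (simp add: excursion_def nth_append rgt_def)
qed (simp add: phase1_at_batch[OF assms(1)])

lemma length_phase1_prefix:
  assumes "x \<le> tape_len N s"
  shows "sum_list (map length (take (tape_len N s - x) (phase1_blocks N s (single_batches S))))
           = (tape_len N s - x) + 2 * (\<Sum>g\<in>{g\<in>S. x < lft s g}. s g - 1)"
proof -
  let ?m = "tape_len N s"
  have at_block: "(\<Sum>j<?m - x. if int (lft s g) = int ?m - int j then 2 * (s g - 1) else 0)
                   = (if x < lft s g then 2 * (s g - 1) else 0)" if "g \<in> S" for g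
  proof -
    have "g < N" using S_files that by blast
    then have "lft s g \<le> ?m" using lft_le_tape_len pos by blast
    then have "(\<Sum>j<?m - x. if int (lft s g) = int ?m - int j then 2 * (s g - 1) else 0)
               = (\<Sum>j<?m - x. if j = ?m - lft s g then 2 * (s g - 1) else 0)"
      by (intro sum.cong) auto
    also have "\<dots> = (if x < lft s g then 2 * (s g - 1) else 0)"
      using \<open>lft s g \<le> ?m\<close> lft_ge_1[of s g] assms by auto
    finally show ?thesis .
  qed
  have "sum_list (map length (take (?m - x) (phase1_blocks N s (single_batches S))))
        = (\<Sum>j<?m - x. 1 + (\<Sum>g\<in>S. if int (lft s g) = int ?m - int j then 2 * (s g - 1) else 0))"
    by (simp add: sum_list_map_take length_phase1_blocks nth_phase1_blocks length_phase1_at)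
  also have "\<dots> = (?m - x) + (\<Sum>g\<in>S. \<Sum>j<?m - x. if int (lft s g) = int ?m - int j then 2 * (s g - 1) else 0)"
    unfolding sum.distrib by (simp add: sum.swap[of _ "{..<?m - x}"])
  also have "\<dots> = (?m - x) + (\<Sum>g\<in>S. if x < lft s g then 2 * (s g - 1) else 0)"
    by (intro arg_cong[where f = "(+) (?m - x)"] sum.cong refl at_block)
  also have "\<dots> = (?m - x) + (\<Sum>g\<in>{g\<in>S. x < lft s g}. 2 * (s g - 1))"
    by (simp only: sum.inter_filter[OF finite_batches])
  also have "\<dots> = (?m - x) + 2 * (\<Sum>g\<in>{g\<in>S. x < lft s g}. s g - 1)"
    by (simp add: sum_distrib_left)
  finally show ?thesis .
qed

lemma length_concat_phase1_blocks:
  "length (concat (phase1_blocks N s (single_batches S))) = tape_len N s + 2 * (\<Sum>g\<in>S. s g - 1)"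
  using length_phase1_prefix[of 0] lft_ge_1[of s]
  by (simp add: length_concat length_phase1_blocks Suc_le_eq)

lemma sched_reads_batch:
  assumes "g \<in> S"
  shows "reads_at s (sched_mv N s (single_batches S)) g
           (tape_len N s - lft s g + 2 * (\<Sum>g'\<in>{g'\<in>S. g < g'}. s g' - 1))"
  unfolding reads_at_def
proof (intro allI impI)
  fix k assume "k < s g"
  let ?m = "tape_len N s"
  let ?blocks = "phase1_blocks N s (single_batches S)"
  let ?i = "?m - lft s g"
  have "g < N" using S_files assms by blast
  then have "lft s g \<le> ?m" using lft_le_tape_len pos by blast
  then have i: "?i < length ?blocks" and block: "?blocks ! ?i = phase1_at s (single_batches S) (int (lft s g))"
    using lft_ge_1[of s g] by (auto simp: length_phase1_blocks nth_phase1_blocks)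
  have k: "k < length (?blocks ! ?i)"
    using block phase1_at_batch[OF assms] \<open>k < s g\<close> by (simp add: excursion_def rgt_def)
  have "{g'\<in>S. lft s g < lft s g'} = {g'\<in>S. g < g'}"
    using lft_less_lft_iff[OF pos \<open>g < N\<close>] S_files by blast
  then have "sum_list (map length (take ?i ?blocks)) = ?i + 2 * (\<Sum>g'\<in>{g'\<in>S. g < g'}. s g' - 1)"
    using length_phase1_prefix[OF \<open>lft s g \<le> ?m\<close>] by simp
  then show "sched_mv N s (single_batches S) (?i + 2 * (\<Sum>g'\<in>{g'\<in>S. g < g'}. s g' - 1) + k)
               = int (lft s g + k)"
    using concat_index_less_length[OF i k] nth_concat_take_lengths[OF i k]
      block nth_phase1_at_batch[OF assms \<open>k < s g\<close>]
    by (simp add: sched_mv_def sched_path_eq_phase1_blocks nth_append)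
qed

lemma sched_mv_phase2:
  assumes "0 \<notin> S" "0 < N"
    and "tape_len N s + 2 * (\<Sum>g\<in>S. s g - 1) \<le> t + 1"
  shows "sched_mv N s (single_batches S) t
           = min (int t - int (tape_len N s + 2 * (\<Sum>g\<in>S. s g - 1)) + 2) (int (tape_len N s))"
proof -
  let ?m = "tape_len N s"
  let ?blocks = "phase1_blocks N s (single_batches S)"
  define P1 where "P1 = ?m + 2 * (\<Sum>g\<in>S. s g - 1)"
  have m: "1 \<le> ?m" using tape_len_ge_1 assms(2) pos by blast
  have len_phase1: "length (concat ?blocks) = P1"
    unfolding P1_def by (rule length_concat_phase1_blocks)
  have len: "length (sched_path N s (single_batches S)) = P1 + (?m - 1)"
    unfolding sched_path_eq_phase1_blocks using len_phase1 by simp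
  consider "t + 1 = P1" | "P1 \<le> t" "t < P1 + (?m - 1)" | "P1 + (?m - 1) \<le> t"
    using assms(3) unfolding P1_def by linarith
  then have "sched_mv N s (single_batches S) t = min (int t - int P1 + 2) (int ?m)"
  proof cases
    case 1
    have lft_S: "2 \<le> lft s g" if "g \<in> S" for g
      using lft_ge_2[of s g] pos assms that by (metis gr0I)
    have i: "?m - 1 < length ?blocks" using m by (simp add: length_phase1_blocks)
    have "?blocks ! (?m - 1) = phase1_at s (single_batches S) 1"
      using m by (simp add: nth_phase1_blocks of_nat_diff)
    also have "\<dots> = [1]"
      using lft_S by (intro phase1_at_no_batch) force
    finally have block: "?blocks ! (?m - 1) = [1]" .
    have "{g\<in>S. 1 < lft s g} = S" using lft_S by force
    then have "sum_list (map length (take (?m - 1) ?blocks)) = t"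
      using length_phase1_prefix[OF m] 1 m unfolding P1_def by simp
    then have "concat ?blocks ! t = 1"
      using nth_concat_take_lengths[OF i, of 0] block by simp
    then have "sched_mv N s (single_batches S) t = 1"
      using 1 len len_phase1 m by (simp add: sched_mv_def sched_path_eq_phase1_blocks nth_append)
    then show ?thesis using 1 m by simp
  next
    case 2
    then show ?thesis
      using len len_phase1 m by (simp add: sched_mv_def sched_path_eq_phase1_blocks nth_append)
  next
    case 3
    then show ?thesis using len by (simp add: sched_mv_def)
  qed
  then show ?thesis unfolding P1_def .
qed

lemma sched_reads_phase2:
  assumes "0 \<notin> S" "h < N"
  shows "reads_at s (sched_mv N s (single_batches S)) h
           (tape_len N s + 2 * (\<Sum>g\<in>S. s g - 1) + lft s h - 2)"
  unfolding reads_at_def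
proof (intro allI impI)
  fix k assume "k < s h"
  let ?P1 = "tape_len N s + 2 * (\<Sum>g\<in>S. s g - 1)"
  have "lft s h + s h \<le> tape_len N s + 1"
    using lft_add_size_le[OF assms(2), of s] lft_eq_tape_len[of s N] by simp
  moreover have "1 \<le> tape_len N s" using tape_len_ge_1 assms(2) pos by simp
  moreover have "?P1 \<le> ?P1 + lft s h - 2 + k + 1" using lft_ge_1[of s h] by simp
  ultimately show "sched_mv N s (single_batches S) (?P1 + lft s h - 2 + k) = int (lft s h + k)"
    using sched_mv_phase2[OF assms(1)] assms(2) \<open>k < s h\<close> lft_ge_1[of s h] by simp
qed

lemma resp_time_sched_le:
  assumes "0 \<notin> S" "h < N"
  shows "resp_time s (sched_mv N s (single_batches S)) h \<le> tape_len N s - lft s h + 2 * detour s S h"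
proof (cases "h \<in> S")
  case True
  then have "reads_at s (sched_mv N s (single_batches S)) h (tape_len N s - lft s h + 2 * detour s S h)"
    using sched_reads_batch by (simp add: detour_def)
  then show ?thesis unfolding resp_time_def by (rule Least_le)
next
  case False
  have "{g\<in>S. h < g} \<union> {g\<in>S. g < h} = S" using False by (auto intro: linorder_neqE_nat)
  moreover have "(\<Sum>g\<in>{g\<in>S. h < g} \<union> {g\<in>S. g < h}. s g - 1)
                   = (\<Sum>g\<in>{g\<in>S. h < g}. s g - 1) + (\<Sum>g\<in>{g\<in>S. g < h}. s g - 1)"
    by (rule sum.union_disjoint) (use finite_batches in auto)
  ultimately have "(\<Sum>g\<in>S. s g - 1) = (\<Sum>g\<in>{g\<in>S. h < g}. s g - 1) + (\<Sum>g\<in>{g\<in>S. g < h}. s g - 1)"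
    by simp
  moreover have "lft s h \<le> tape_len N s" using lft_le_tape_len assms(2) pos by blast
  ultimately have "tape_len N s + 2 * (\<Sum>g\<in>S. s g - 1) + lft s h - 2
                     = tape_len N s - lft s h + 2 * detour s S h"
    using False lft_ge_1[of s h] by (simp add: detour_def)
  then have "reads_at s (sched_mv N s (single_batches S)) h (tape_len N s - lft s h + 2 * detour s S h)"
    using sched_reads_phase2[OF assms] by simp
  then show ?thesis unfolding resp_time_def by (rule Least_le)
qed

end

section \<open>The invariant of FGS\<close>

text \<open>
  Dropping the batch (u, u) of the greedy strategy delays the requests for u into Phase 2, by at
  most l(u) plus the batches left of u, and saves s(u) for every request for a file left of u.
\<close>
definition removal_cost :: "nat \<Rightarrow> (nat \<Rightarrow> nat) \<Rightarrow> 'r set \<Rightarrow> ('r \<Rightarrow> nat) \<Rightarrow> nat set \<Rightarrow> nat" where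
  "removal_cost N s R ff C =
     (\<Sum>u\<in>GS_files N R ff - C. nreq R ff u * (lft s u + (\<Sum>g\<in>{g\<in>C. g < u}. s g)))"

definition removal_gain :: "nat \<Rightarrow> (nat \<Rightarrow> nat) \<Rightarrow> 'r set \<Rightarrow> ('r \<Rightarrow> nat) \<Rightarrow> nat set \<Rightarrow> nat" where
  "removal_gain N s R ff C = (\<Sum>u\<in>GS_files N R ff - C. s u * (\<Sum>g<u. nreq R ff g))"

definition fgs_invariant :: "nat \<Rightarrow> (nat \<Rightarrow> nat) \<Rightarrow> 'r set \<Rightarrow> ('r \<Rightarrow> nat) \<Rightarrow> nat set \<Rightarrow> bool" where
  "fgs_invariant N s R ff C \<longleftrightarrow>
     C \<subseteq> GS_files N R ff \<and> removal_cost N s R ff C \<le> removal_gain N s R ff C"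

lemma finite_GS_files: "finite (GS_files N R ff)"
  unfolding GS_files_def by (rule finite_subset[of _ "{..<N}"]) auto

lemma fgs_invariant_GS_files: "fgs_invariant N s R ff (GS_files N R ff)"
  unfolding fgs_invariant_def removal_cost_def removal_gain_def by simp

lemma removal_gain_remove:
  assumes "f \<in> C" "C \<subseteq> GS_files N R ff"
  shows "removal_gain N s R ff (C - {f}) = s f * (\<Sum>g<f. nreq R ff g) + removal_gain N s R ff C"
proof -
  have U: "GS_files N R ff - (C - {f}) = insert f (GS_files N R ff - C)" using assms by auto
  have "finite (GS_files N R ff - C)" using finite_GS_files by blast
  moreover have "f \<notin> GS_files N R ff - C" using assms(1) by blast
  ultimately show ?thesis unfolding removal_gain_def U by (rule sum.insert)
qed

lemma removal_cost_remove:
  assumes "f \<in> C" "C \<subseteq> GS_files N R ff"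
  shows "removal_cost N s R ff (C - {f}) + s f * (\<Sum>u\<in>{u\<in>GS_files N R ff - C. f < u}. nreq R ff u)
           = nreq R ff f * (lft s f + (\<Sum>g\<in>{g\<in>C. g < f}. s g)) + removal_cost N s R ff C"
proof -
  let ?n = "nreq R ff"
  let ?U = "GS_files N R ff - C"
  let ?c = "\<lambda>u. ?n u * (lft s u + (\<Sum>g\<in>{g\<in>C - {f}. g < u}. s g))"
  have fin: "finite ?U" using finite_GS_files by blast
  have before_u: "(\<Sum>g\<in>{g\<in>C. g < u}. s g) = (\<Sum>g\<in>{g\<in>C - {f}. g < u}. s g) + (if f < u then s f else 0)"
    for u
  proof -
    have "{g\<in>C. g < u} = {g\<in>C - {f}. g < u} \<union> (if f < u then {f} else {})"
      using assms(1) by auto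
    then show ?thesis by (simp add: sum.union_disjoint)
  qed
  have "removal_cost N s R ff C = (\<Sum>u\<in>?U. ?c u + (if f < u then s f * ?n u else 0))"
    unfolding removal_cost_def by (intro sum.cong refl) (simp add: before_u algebra_simps)
  also have "\<dots> = (\<Sum>u\<in>?U. ?c u) + (\<Sum>u\<in>{u\<in>?U. f < u}. s f * ?n u)"
    by (simp only: sum.distrib sum.inter_filter[OF fin])
  also have "\<dots> = (\<Sum>u\<in>?U. ?c u) + s f * (\<Sum>u\<in>{u\<in>?U. f < u}. ?n u)"
    by (simp add: sum_distrib_left)
  finally have cost_C: "removal_cost N s R ff C = (\<Sum>u\<in>?U. ?c u) + s f * (\<Sum>u\<in>{u\<in>?U. f < u}. ?n u)" .
  have U: "GS_files N R ff - (C - {f}) = insert f ?U" using assms by auto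
  have before_f: "{g\<in>C - {f}. g < f} = {g\<in>C. g < f}" by auto
  have "f \<notin> ?U" using assms(1) by blast
  have "removal_cost N s R ff (C - {f}) = ?n f * (lft s f + (\<Sum>g\<in>{g\<in>C. g < f}. s g)) + (\<Sum>u\<in>?U. ?c u)"
    unfolding removal_cost_def U sum.insert[OF fin \<open>f \<notin> ?U\<close>] before_f
    by (rule refl)
  with cost_C show ?thesis by simp
qed

text \<open>
  The requests for unbatched files right of f, counted in the FGS test, are paid for by the
  decrease of their own removal cost once f is unbatched.
\<close>
lemma fgs_check_preserves_invariant:
  assumes inv: "fgs_invariant N s R ff C"
  shows "fgs_invariant N s R ff (fgs_check N s R ff f C)"
proof (cases "f \<in> C \<and> nreq R ff f * (lft s f + (\<Sum>g\<in>{g\<in>C. g < f}. s g))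
              < s f * ((\<Sum>g<f. nreq R ff g) + (\<Sum>g\<in>{f<..<N} - C. nreq R ff g))")
  case False
  show ?thesis unfolding fgs_check_def if_not_P[OF False] by (rule inv)
next
  case True
  let ?n = "nreq R ff"
  let ?later = "\<Sum>u\<in>{u\<in>GS_files N R ff - C. f < u}. ?n u"
  have C: "C \<subseteq> GS_files N R ff" using inv unfolding fgs_invariant_def by simp
  have "(\<Sum>g\<in>{f<..<N} - C. ?n g) = (\<Sum>g\<in>{g\<in>{f<..<N} - C. ?n g \<noteq> 0}. ?n g)"
    by (rule sum.mono_neutral_right) auto
  also have "\<dots> \<le> ?later"
    by (rule sum_mono2) (use finite_GS_files in \<open>auto simp: GS_files_def\<close>)
  finally have later: "(\<Sum>g\<in>{f<..<N} - C. ?n g) \<le> ?later" .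
  have "removal_cost N s R ff (C - {f}) + s f * ?later
          = ?n f * (lft s f + (\<Sum>g\<in>{g\<in>C. g < f}. s g)) + removal_cost N s R ff C"
    using removal_cost_remove True C by blast
  also have "\<dots> < s f * ((\<Sum>g<f. ?n g) + ?later) + removal_gain N s R ff C"
    using True inv mult_le_mono2[OF add_left_mono[OF later, of "\<Sum>g<f. ?n g"], of "s f"]
    unfolding fgs_invariant_def by linarith
  also have "\<dots> = removal_gain N s R ff (C - {f}) + s f * ?later"
    using removal_gain_remove[of f C N R ff s] True C by (simp add: algebra_simps)
  finally have "removal_cost N s R ff (C - {f}) \<le> removal_gain N s R ff (C - {f})" by simp
  with C True show ?thesis unfolding fgs_invariant_def fgs_check_def by auto
qed

lemma fgs_round_preserves_invariant:
  "fgs_invariant N s R ff C \<Longrightarrow> fgs_invariant N s R ff (fgs_round N s R ff C)"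
  unfolding fgs_round_def
  by (rule fold_invariant[where Q = "\<lambda>_. True"]) (simp_all add: fgs_check_preserves_invariant)

lemma fgs_invariant_iterate:
  "fgs_invariant N s R ff ((fgs_round N s R ff ^^ k) (GS_files N R ff))"
  by (induction k) (simp_all add: fgs_invariant_GS_files fgs_round_preserves_invariant)

section \<open>Charging the detours to the lower bound\<close>

lemma sum_mult_sum_greater_swap:
  fixes a b :: "nat \<Rightarrow> 'a::comm_semiring_0"
  assumes "finite A" "finite B"
  shows "(\<Sum>h\<in>A. a h * (\<Sum>g\<in>{g\<in>B. h < g}. b g)) = (\<Sum>g\<in>B. b g * (\<Sum>h\<in>{h\<in>A. h < g}. a h))"
  by (simp add: sum_distrib_left sum_distrib_right sum.swap_restrict[OF assms] mult.commute)

lemma sum_size_mult_sum_before_le: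
  fixes n :: "nat \<Rightarrow> nat"
  assumes pos: "\<forall>k<N. 0 < s k"
  shows "(\<Sum>u<N. s u * (\<Sum>h<u. n h)) \<le> (\<Sum>h<N. n h * (tape_len N s - lft s h))"
proof -
  have "(\<Sum>u<N. s u * (\<Sum>h<u. n h)) = (\<Sum>u<N. s u * (\<Sum>h\<in>{h\<in>{..<N}. h < u}. n h))"
    by (intro sum.cong refl arg_cong[where f = "(*) _"]) auto
  also have "\<dots> = (\<Sum>h<N. n h * (\<Sum>u\<in>{u\<in>{..<N}. h < u}. s u))"
    by (rule sum_mult_sum_greater_swap[symmetric]) simp_all
  also have "\<dots> = (\<Sum>h<N. n h * (\<Sum>u\<in>{h<..<N}. s u))"
    by (intro sum.cong refl arg_cong[where f = "(*) _"]) auto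
  also have "\<dots> \<le> (\<Sum>h<N. n h * (tape_len N s - lft s h))"
    using pos by (intro sum_mono mult_le_mono2 sum_sizes_after_le) auto
  finally show ?thesis .
qed

lemma sum_by_file:
  assumes "finite R" "\<forall>q\<in>R. ff q < N"
  shows "(\<Sum>q\<in>R. F (ff q)) = (\<Sum>h<N. nreq R ff h * F h)"
proof -
  have "(\<Sum>q\<in>R. F (ff q)) = (\<Sum>h<N. \<Sum>q\<in>{q\<in>R. ff q = h}. F (ff q))"
    using assms by (intro sum.group[symmetric]) auto
  also have "\<dots> = (\<Sum>h<N. nreq R ff h * F h)"
    unfolding nreq_def by (intro sum.cong refl) simp
  finally show ?thesis .
qed

lemma sum_unbatched_detour_le_removal_cost:
  assumes "S \<subseteq> GS_files N R ff"
  shows "(\<Sum>h<N. nreq R ff h * (if h \<in> S then 0 else lft s h - 1 + (\<Sum>g\<in>{g\<in>S. g < h}. s g - 1)))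
           \<le> removal_cost N s R ff S"
proof -
  let ?d = "\<lambda>h. nreq R ff h * (if h \<in> S then 0 else lft s h - 1 + (\<Sum>g\<in>{g\<in>S. g < h}. s g - 1))"
  have "?d h = 0" if "h < N" "h \<notin> GS_files N R ff - S" for h
    using that by (cases "h = 0") (auto simp: GS_files_def lft_def)
  then have "(\<Sum>h<N. ?d h) = (\<Sum>h\<in>GS_files N R ff - S. ?d h)"
    by (intro sum.mono_neutral_right) (auto simp: GS_files_def)
  also have "\<dots> \<le> removal_cost N s R ff S"
    unfolding removal_cost_def
    by (intro sum_mono mult_le_mono2) (auto intro!: add_mono sum_mono)
  finally show ?thesis .
qed

lemma sum_detour_le:
  assumes pos: "\<forall>k<N. 0 < s k" and inv: "fgs_invariant N s R ff S"
  shows "(\<Sum>h<N. nreq R ff h * detour s S h) \<le> (\<Sum>h<N. nreq R ff h * (tape_len N s - lft s h))"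
proof -
  let ?n = "nreq R ff"
  let ?G = "GS_files N R ff"
  let ?w = "\<lambda>u. s u * (\<Sum>h<u. ?n h)"
  have S: "S \<subseteq> ?G" and gain: "removal_cost N s R ff S \<le> removal_gain N s R ff S"
    using inv unfolding fgs_invariant_def by auto
  have finS: "finite S" using S finite_GS_files by (rule finite_subset)
  have "(\<Sum>h<N. ?n h * (\<Sum>g\<in>{g\<in>S. h < g}. s g - 1))
          = (\<Sum>g\<in>S. (s g - 1) * (\<Sum>h\<in>{h\<in>{..<N}. h < g}. ?n h))"
    using finS by (intro sum_mult_sum_greater_swap) simp_all
  also have "\<dots> \<le> (\<Sum>g\<in>S. ?w g)"
    by (intro sum_mono mult_le_mono diff_le_self sum_mono2) auto
  finally have batched: "(\<Sum>h<N. ?n h * (\<Sum>g\<in>{g\<in>S. h < g}. s g - 1)) \<le> (\<Sum>g\<in>S. ?w g)" .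
  have "(\<Sum>h<N. ?n h * detour s S h)
          = (\<Sum>h<N. ?n h * (\<Sum>g\<in>{g\<in>S. h < g}. s g - 1))
            + (\<Sum>h<N. ?n h * (if h \<in> S then 0 else lft s h - 1 + (\<Sum>g\<in>{g\<in>S. g < h}. s g - 1)))"
    by (simp add: detour_def sum.distrib distrib_left)
  also have "\<dots> \<le> (\<Sum>g\<in>S. ?w g) + removal_gain N s R ff S"
    using batched sum_unbatched_detour_le_removal_cost[OF S, of s] gain by linarith
  also have "\<dots> = (\<Sum>u\<in>?G. ?w u)"
    unfolding removal_gain_def using sum.subset_diff[OF S finite_GS_files, of ?w] by simp
  also have "\<dots> \<le> (\<Sum>u<N. ?w u)"
    by (intro sum_mono2) (auto simp: GS_files_def)
  also have "\<dots> \<le> (\<Sum>h<N. ?n h * (tape_len N s - lft s h))"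
    using sum_size_mult_sum_before_le[OF pos] .
  finally show ?thesis .
qed

theorem proposition7:
  fixes N :: nat and s :: "nat \<Rightarrow> nat" and R :: "'r set" and ff :: "'r \<Rightarrow> nat"
  assumes "\<forall>i<N. 0 < s i"
    and "finite R"
    and "\<forall>q\<in>R. ff q < N"
  shows "v N s R ff (FGS N s R ff) \<le> 3 * OPT N s R ff"
proof (cases "R = {}")
  case True
  then show ?thesis unfolding v_def total_resp_def by simp
next
  case False
  note pos = assms(1) and files = assms(3)
  let ?n = "nreq R ff" and ?m = "tape_len N s"
  define S where "S = (fgs_round N s R ff ^^ N) (GS_files N R ff)"
  have N: "0 < N" using False files by fastforce
  have inv: "fgs_invariant N s R ff S" unfolding S_def by (rule fgs_invariant_iterate)
  then have "S \<subseteq> {..<N}" "0 \<notin> S" unfolding fgs_invariant_def GS_files_def by auto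
  note resp = resp_time_sched_le[OF pos this]
  have "v N s R ff (FGS N s R ff) \<le> (\<Sum>q\<in>R. ?m - lft s (ff q) + 2 * detour s S (ff q))"
    unfolding v_def total_resp_def FGS_def S_def[symmetric] using resp files by (intro sum_mono) auto
  also have "\<dots> = (\<Sum>h<N. ?n h * (?m - lft s h + 2 * detour s S h))"
    by (rule sum_by_file[OF assms(2,3)])
  also have "\<dots> = (\<Sum>h<N. ?n h * (?m - lft s h)) + 2 * (\<Sum>h<N. ?n h * detour s S h)"
    by (simp add: sum.distrib sum_distrib_left distrib_left mult.left_commute)
  also have "\<dots> \<le> 3 * (\<Sum>h<N. ?n h * (?m - lft s h))"
    using sum_detour_le[OF pos inv] by simp
  also have "\<dots> = 3 * (\<Sum>q\<in>R. ?m - lft s (ff q))"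
    using sum_by_file[OF assms(2,3), of "\<lambda>h. ?m - lft s h"] by simp
  also have "\<dots> \<le> 3 * OPT N s R ff"
    using OPT_ge_sum_distances[OF pos files N] by simp
  finally show ?thesis .
qed

end
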